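(* Let $R$ be a commutative Noetherian ring with unity and let $y\in R$ be a nonzero zero divisor. If $\deg[y]>\deg[x]$ for every vertex $[x]\neq[y]$ of $\Gamma_E(R)$, then $\operatorname{ann}(y)$ is a maximal element of $\mathfrak F=\{\operatorname{ann}(z)\mid 0\neq z\in R\}$, and hence is an associated prime of $R$.
   Context: For $x,y\in R$ write $x\sim y$ iff $\operatorname{ann}(x)=\operatorname{ann}(y)$; $[x]$ denotes the equivalence class of $x$. Let $Z^*(R)$ be the set of nonzero zero divisors of $R$. The graph $\Gamma_E(R)$ is the simple graph whose vertices are the classes $[x]$ with $x\in Z^*(R)$, two distinct vertices $[x],[y]$ being adjacent iff $xy=0$. The degree of a vertex is the number of vertices adjacent to it. An associated prime of $R$ is a prime ideal of the form $\operatorname{ann}(y)$, $y\in R$. *)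

theory Defs
  imports "HOL-Algebra.Ring_Divisibility" "HOL-Algebra.Ideal"
begin

definition ann :: "('a, 'b) ring_scheme \<Rightarrow> 'a \<Rightarrow> 'a set" where
  "ann R x = {r \<in> carrier R. r \<otimes>\<^bsub>R\<^esub> x = \<zero>\<^bsub>R\<^esub>}"

definition zdiv_star :: "('a, 'b) ring_scheme \<Rightarrow> 'a set" where
  "zdiv_star R = {x \<in> carrier R. x \<noteq> \<zero>\<^bsub>R\<^esub> \<and>
      (\<exists>y \<in> carrier R. y \<noteq> \<zero>\<^bsub>R\<^esub> \<and> x \<otimes>\<^bsub>R\<^esub> y = \<zero>\<^bsub>R\<^esub>)}"

definition eclass :: "('a, 'b) ring_scheme \<Rightarrow> 'a \<Rightarrow> 'a set" where
  "eclass R x = {z \<in> carrier R. ann R z = ann R x}"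

definition GammaE_vertices :: "('a, 'b) ring_scheme \<Rightarrow> 'a set set" where
  "GammaE_vertices R = eclass R ` zdiv_star R"

definition GammaE_adj :: "('a, 'b) ring_scheme \<Rightarrow> 'a set \<Rightarrow> 'a set \<Rightarrow> bool" where
  "GammaE_adj R u v \<longleftrightarrow> u \<in> GammaE_vertices R \<and> v \<in> GammaE_vertices R \<and> u \<noteq> v \<and>
      (\<exists>x \<in> u. \<exists>y \<in> v. x \<otimes>\<^bsub>R\<^esub> y = \<zero>\<^bsub>R\<^esub>)"

definition GammaE_neighbors :: "('a, 'b) ring_scheme \<Rightarrow> 'a set \<Rightarrow> 'a set set" where
  "GammaE_neighbors R v = {u. GammaE_adj R u v}"

text \<open>deg u < deg v, as cardinals (degrees may be infinite).\<close>
definition deg_less :: "('a, 'b) ring_scheme \<Rightarrow> 'a set \<Rightarrow> 'a set \<Rightarrow> bool" where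
  "deg_less R u v \<longleftrightarrow> ordLess2 (card_of (GammaE_neighbors R u)) (card_of (GammaE_neighbors R v))"

definition ann_family :: "('a, 'b) ring_scheme \<Rightarrow> 'a set set" where
  "ann_family R = {ann R z | z. z \<in> carrier R \<and> z \<noteq> \<zero>\<^bsub>R\<^esub>}"

definition maximal_in :: "'c set set \<Rightarrow> 'c set \<Rightarrow> bool" where
  "maximal_in F I \<longleftrightarrow> I \<in> F \<and> (\<forall>J \<in> F. I \<subseteq> J \<longrightarrow> J = I)"

definition associated_prime :: "('a, 'b) ring_scheme \<Rightarrow> 'a set \<Rightarrow> bool" where
  "associated_prime R P \<longleftrightarrow> (\<exists>w \<in> carrier R. P = ann R w) \<and> primeideal P R"

end

theory Submission
  imports Defs
begin

text \<open>
  Suppose z \<noteq> 0 with ann y \<subset> ann z. Then z is a zero divisor and [z] \<noteq> [y]. Every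
  neighbour of [y] other than [z] is a neighbour of [z], and if [z] is a neighbour of [y]
  then [y] is one of [z]; so the map swapping [z] for [y] embeds the neighbours of [y]
  into those of [z], giving deg [y] \<le> deg [z], against the hypothesis. Hence ann y is
  maximal among annihilators of nonzero elements, and such an annihilator is prime: if
  ab \<in> ann y and b \<notin> ann y, then ann y \<subseteq> ann (by) forces equality, and a \<in> ann (by).
\<close>

context cring
begin

lemma ann_ideal:
  assumes "y \<in> carrier R"
  shows "ideal (ann R y) R"
proof (rule idealI)
  show "ring R" by unfold_locales
  show "subgroup (ann R y) (add_monoid R)"
  proof (rule subgroup.intro)
    show "ann R y \<subseteq> carrier (add_monoid R)" by (auto simp: ann_def)
    show "x \<otimes>\<^bsub>add_monoid R\<^esub> z \<in> ann R y" if "x \<in> ann R y" "z \<in> ann R y" for x z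
      using that assms by (auto simp: ann_def l_distr)
    show "\<one>\<^bsub>add_monoid R\<^esub> \<in> ann R y" using assms by (auto simp: ann_def)
    show "inv\<^bsub>add_monoid R\<^esub> x \<in> ann R y" if "x \<in> ann R y" for x
      using that assms by (auto simp: ann_def a_inv_def[symmetric] l_minus)
  qed
  show "x \<otimes> a \<in> ann R y" if "a \<in> ann R y" "x \<in> carrier R" for a x
    using that assms by (auto simp: ann_def m_assoc)
  show "a \<otimes> x \<in> ann R y" if "a \<in> ann R y" "x \<in> carrier R" for a x
  proof -
    have a: "a \<in> carrier R" "a \<otimes> y = \<zero>" using that by (auto simp: ann_def)
    have "a \<otimes> x \<otimes> y = x \<otimes> (a \<otimes> y)" using a(1) that(2) assms by (metis m_assoc m_comm)
    then show ?thesis using a that assms by (simp add: ann_def)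
  qed
qed

lemma ann_subset_ann_mult:
  assumes "b \<in> carrier R" "y \<in> carrier R"
  shows "ann R y \<subseteq> ann R (b \<otimes> y)"
  using assms by (auto simp: ann_def m_lcomm[of _ b y])

lemma mem_ann_iff_mult_eq_zero:
  assumes "a \<in> carrier R" "x \<in> carrier R"
  shows "a \<in> ann R x \<longleftrightarrow> x \<otimes> a = \<zero>"
  using assms by (simp add: ann_def m_comm)

lemma mem_ann_commute:
  assumes "a \<in> carrier R" "x \<in> carrier R"
  shows "a \<in> ann R x \<longleftrightarrow> x \<in> ann R a"
  using assms by (simp add: ann_def m_comm)

lemma primeideal_ann_if_maximal:
  assumes max: "maximal_in (ann_family R) (ann R y)"
    and y: "y \<in> carrier R" "y \<noteq> \<zero>"
  shows "primeideal (ann R y) R"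
proof (rule primeidealI)
  show "ideal (ann R y) R" by (rule ann_ideal[OF y(1)])
  show "cring R" by unfold_locales
  have "\<one> \<notin> ann R y" using y by (simp add: ann_def)
  then show "carrier R \<noteq> ann R y" by blast
  fix a b assume ab: "a \<in> carrier R" "b \<in> carrier R" "a \<otimes> b \<in> ann R y"
  show "a \<in> ann R y \<or> b \<in> ann R y"
  proof (rule disjCI)
    assume "b \<notin> ann R y"
    then have "b \<otimes> y \<noteq> \<zero>" using ab by (simp add: ann_def)
    then have "ann R (b \<otimes> y) \<in> ann_family R" using ab y by (auto simp: ann_family_def)
    with max have "ann R (b \<otimes> y) = ann R y"
      using ann_subset_ann_mult[OF ab(2) y(1)] by (simp add: maximal_in_def)
    moreover have "a \<in> ann R (b \<otimes> y)" using ab y by (simp add: ann_def m_assoc)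
    ultimately show "a \<in> ann R y" by simp
  qed
qed

lemma eclass_eq_iff:
  assumes "z \<in> carrier R" "u \<in> carrier R"
  shows "eclass R z = eclass R u \<longleftrightarrow> ann R z = ann R u"
  using assms by (auto simp: eclass_def)

lemma mult_eq_zero_if_mem_eclass:
  assumes "x \<in> eclass R a" "x' \<in> eclass R b" "x \<otimes> x' = \<zero>"
    and "a \<in> carrier R" "b \<in> carrier R"
  shows "a \<otimes> b = \<zero>"
proof -
  have x: "x \<in> carrier R" "x' \<in> carrier R" "ann R x = ann R a" "ann R x' = ann R b"
    using assms(1,2) by (auto simp: eclass_def)
  have "x \<in> ann R x'" using assms(3) x(1) by (simp add: ann_def)
  then have "x \<in> ann R b" using x(4) by simp
  then have "b \<in> ann R a" using x assms(5) mem_ann_commute by auto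
  then show ?thesis using assms(4,5) by (simp add: mem_ann_iff_mult_eq_zero)
qed

lemma GammaE_adj_eclass_iff:
  assumes "a \<in> zdiv_star R" "b \<in> zdiv_star R"
  shows "GammaE_adj R (eclass R a) (eclass R b) \<longleftrightarrow> ann R a \<noteq> ann R b \<and> a \<otimes> b = \<zero>"
proof -
  have ab: "a \<in> carrier R" "b \<in> carrier R" using assms by (auto simp: zdiv_star_def)
  then have "a \<in> eclass R a" "b \<in> eclass R b" by (auto simp: eclass_def)
  then have "(\<exists>x \<in> eclass R a. \<exists>x' \<in> eclass R b. x \<otimes> x' = \<zero>) \<longleftrightarrow> a \<otimes> b = \<zero>"
    using mult_eq_zero_if_mem_eclass ab by blast
  then show ?thesis
    using assms ab eclass_eq_iff by (auto simp: GammaE_adj_def GammaE_vertices_def)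
qed

lemma neighbors_card_of_ordLeq_if_ann_subset:
  assumes y: "y \<in> zdiv_star R" and z: "z \<in> zdiv_star R"
    and sub: "ann R y \<subseteq> ann R z" and ne: "ann R z \<noteq> ann R y"
  shows "ordLeq2 (card_of (GammaE_neighbors R (eclass R y)))
                 (card_of (GammaE_neighbors R (eclass R z)))"
proof -
  have yz: "y \<in> carrier R" "z \<in> carrier R" using y z by (auto simp: zdiv_star_def)
  define f where "f v = (if v = eclass R z then eclass R y else v)" for v
  have "inj_on f (GammaE_neighbors R (eclass R y))"
    by (auto simp: inj_on_def f_def GammaE_neighbors_def GammaE_adj_def)
  moreover have "f u \<in> GammaE_neighbors R (eclass R z)"
    if "u \<in> GammaE_neighbors R (eclass R y)" for u
  proof -
    have "u \<in> GammaE_vertices R" using that by (simp add: GammaE_neighbors_def GammaE_adj_def)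
    then obtain x where x: "x \<in> zdiv_star R" "u = eclass R x"
      unfolding GammaE_vertices_def by blast
    have xc: "x \<in> carrier R" using x by (simp add: zdiv_star_def)
    have xy: "ann R x \<noteq> ann R y" "x \<otimes> y = \<zero>"
      using that x GammaE_adj_eclass_iff[OF x(1) y] by (auto simp: GammaE_neighbors_def)
    show ?thesis
    proof (cases "u = eclass R z")
      case True
      then have "ann R x = ann R z" using eclass_eq_iff xc yz x by auto
      moreover have "y \<in> ann R x" using xy xc yz by (simp add: ann_def m_comm)
      ultimately have "y \<otimes> z = \<zero>" using yz by (simp add: ann_def m_comm)
      then show ?thesis
        using GammaE_adj_eclass_iff[OF y z] ne True by (auto simp: f_def GammaE_neighbors_def)
    next
      case False
      have "x \<otimes> z = \<zero>" using xy xc sub by (auto simp: ann_def)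
      moreover have "ann R x \<noteq> ann R z" using False x eclass_eq_iff xc yz by auto
      ultimately show ?thesis
        using GammaE_adj_eclass_iff[OF x(1) z] x False by (simp add: f_def GammaE_neighbors_def)
    qed
  qed
  ultimately show ?thesis using card_of_ordLeq by blast
qed

end

theorem proposition3p1:
  fixes R (structure) and y
  assumes "cring R" and "noetherian_ring R"
    and "y \<in> zdiv_star R"
    and "\<forall>v \<in> GammaE_vertices R. v \<noteq> eclass R y \<longrightarrow> deg_less R v (eclass R y)"
  shows "maximal_in (ann_family R) (ann R y) \<and> associated_prime R (ann R y)"
proof -
  interpret cring R by fact
  have y: "y \<in> carrier R" "y \<noteq> \<zero>" using assms(3) by (auto simp: zdiv_star_def)
  obtain w where w: "w \<in> carrier R" "w \<noteq> \<zero>" "w \<in> ann R y"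
    using assms(3) by (auto simp: zdiv_star_def mem_ann_iff_mult_eq_zero)
  have "ann R z = ann R y" if z: "z \<in> carrier R" "z \<noteq> \<zero>" and sub: "ann R y \<subseteq> ann R z" for z
  proof (rule ccontr)
    assume ne: "ann R z \<noteq> ann R y"
    have "z \<in> ann R w" using w sub z mem_ann_commute by auto
    then have "z \<in> zdiv_star R" using z w by (auto simp: zdiv_star_def ann_def m_comm)
    then have "deg_less R (eclass R z) (eclass R y)"
      using assms(4) ne eclass_eq_iff z y by (auto simp: GammaE_vertices_def)
    moreover have "ordLeq2 (card_of (GammaE_neighbors R (eclass R y)))
                           (card_of (GammaE_neighbors R (eclass R z)))"
      using neighbors_card_of_ordLeq_if_ann_subset[OF assms(3) \<open>z \<in> zdiv_star R\<close> sub ne] .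
    ultimately show False using not_ordLess_ordLeq by (auto simp: deg_less_def)
  qed
  then have max: "maximal_in (ann_family R) (ann R y)"
    unfolding maximal_in_def ann_family_def using y by blast
  moreover have "primeideal (ann R y) R" using primeideal_ann_if_maximal[OF max y] .
  ultimately show ?thesis using y(1) by (auto simp: associated_prime_def)
qed

end
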